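(* Let $f:\mathbb{B}\to\mathbb{H}$ be an arbitrary function and assume that the $3\times 3$ Pick matrix $P_f(z_1,z_2,z_3)$ is positive semidefinite for every $(z_1,z_2,z_3)\in\mathbb{B}^3$. Then $f$ belongs to the left Schur class $\mathcal{QS}_L$; that is, there exist $f_k\in\mathbb{H}$ with $\limsup_{k\to\infty}\sqrt[k]{|f_k|}\le 1$ such that $f(z)=\sum_{k=0}^\infty z^k f_k$ for all $z\in\mathbb{B}$ (the series converging absolutely), and $|f(z)|\le 1$ for all $z\in\mathbb{B}$.
   Context: $\mathbb{H}$ denotes the real quaternions $x_0+\mathbf{i}x_1+\mathbf{j}x_2+\mathbf{k}x_3$ with $\mathbf{i}^2=\mathbf{j}^2=\mathbf{k}^2=\mathbf{ijk}=-1$; $\bar\alpha$ is the quaternionic conjugate and $|\alpha|^2=\alpha\bar\alpha$. $\mathbb{B}=\{\alpha\in\mathbb{H}:|\alpha|<1\}$. For $z_1,\dots,z_n\in\mathbb{B}$ the Pick matrix of $f$ is the quaternionic $n\times n$ matrix $P_f(z_1,\dots,z_n)=\Big[\sum_{k=0}^\infty z_i^k\,(1-f(z_i)\overline{f(z_j)})\,\bar z_j^{\,k}\Big]_{i,j=1}^n$ (the series converge absolutely); it is the unique solution $P$ of $P-TPT^*=EE^*-NN^*$ with $T=\mathrm{diag}(z_1,\dots,z_n)$, $E=(1,\dots,1)^\top$, $N=(f(z_1),\dots,f(z_n))^\top$. A quaternionic matrix $A\in\mathbb{H}^{n\times n}$ is positive semidefinite if $A=A^*$ (conjugate transpose) and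 $x^*Ax\ge 0$ for all $x\in\mathbb{H}^n$. The left Schur class $\mathcal{QS}_L$ consists of functions $f:\mathbb{B}\to\mathbb{H}$ of the form $f(z)=\sum_{k\ge0} z^k f_k$ with quaternion coefficients on the right, $\limsup_k\sqrt[k]{|f_k|}\le1$, and $|f(\alpha)|\le 1$ for all $\alpha\in\mathbb{B}$. *)

theory Defs
  imports "HOL-Analysis.Analysis"
begin

text \<open>Quaternion x0 + i x1 + j x2 + k x3 with i^2 = j^2 = k^2 = ijk = -1.\<close>

datatype quat = Quat (qRe: real) (qIm1: real) (qIm2: real) (qIm3: real)

lemma quat_eq_iff: "x = y \<longleftrightarrow> qRe x = qRe y \<and> qIm1 x = qIm1 y \<and> qIm2 x = qIm2 y \<and> qIm3 x = qIm3 y"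
  by (cases x; cases y) auto

lemma quat_eqI: "qRe x = qRe y \<Longrightarrow> qIm1 x = qIm1 y \<Longrightarrow> qIm2 x = qIm2 y \<Longrightarrow> qIm3 x = qIm3 y \<Longrightarrow> x = y"
  by (simp add: quat_eq_iff)

instantiation quat :: ab_group_add
begin
definition "0 = Quat 0 0 0 0"
definition "x + y = Quat (qRe x + qRe y) (qIm1 x + qIm1 y) (qIm2 x + qIm2 y) (qIm3 x + qIm3 y)"
definition "- x = Quat (- qRe x) (- qIm1 x) (- qIm2 x) (- qIm3 x)"
definition "x - y = Quat (qRe x - qRe y) (qIm1 x - qIm1 y) (qIm2 x - qIm2 y) (qIm3 x - qIm3 y)"
instance by standard (simp_all add: quat_eq_iff zero_quat_def plus_quat_def uminus_quat_def minus_quat_def)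
end

lemma quat_add_simps [simp]:
  "qRe 0 = 0" "qIm1 0 = 0" "qIm2 0 = 0" "qIm3 0 = 0"
  "qRe (x + y) = qRe x + qRe y" "qIm1 (x + y) = qIm1 x + qIm1 y"
  "qIm2 (x + y) = qIm2 x + qIm2 y" "qIm3 (x + y) = qIm3 x + qIm3 y"
  "qRe (- x) = - qRe x" "qIm1 (- x) = - qIm1 x" "qIm2 (- x) = - qIm2 x" "qIm3 (- x) = - qIm3 x"
  "qRe (x - y) = qRe x - qRe y" "qIm1 (x - y) = qIm1 x - qIm1 y"
  "qIm2 (x - y) = qIm2 x - qIm2 y" "qIm3 (x - y) = qIm3 x - qIm3 y"
  by (simp_all add: zero_quat_def plus_quat_def uminus_quat_def minus_quat_def)

instantiation quat :: real_vector
begin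
definition "scaleR r x = Quat (r * qRe x) (r * qIm1 x) (r * qIm2 x) (r * qIm3 x)"
instance by standard (simp_all add: quat_eq_iff scaleR_quat_def algebra_simps)
end

lemma quat_scaleR_simps [simp]:
  "qRe (scaleR r x) = r * qRe x" "qIm1 (scaleR r x) = r * qIm1 x"
  "qIm2 (scaleR r x) = r * qIm2 x" "qIm3 (scaleR r x) = r * qIm3 x"
  by (simp_all add: scaleR_quat_def)

instantiation quat :: ring_1
begin
definition "1 = Quat 1 0 0 0"
definition "x * y = Quat
   (qRe x * qRe y - qIm1 x * qIm1 y - qIm2 x * qIm2 y - qIm3 x * qIm3 y)
   (qRe x * qIm1 y + qIm1 x * qRe y + qIm2 x * qIm3 y - qIm3 x * qIm2 y)
   (qRe x * qIm2 y - qIm1 x * qIm3 y + qIm2 x * qRe y + qIm3 x * qIm1 y)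
   (qRe x * qIm3 y + qIm1 x * qIm2 y - qIm2 x * qIm1 y + qIm3 x * qRe y)"
instance by standard (simp_all add: quat_eq_iff one_quat_def times_quat_def algebra_simps)
end

lemma quat_mult_simps [simp]:
  "qRe 1 = 1" "qIm1 1 = 0" "qIm2 1 = 0" "qIm3 1 = 0"
  "qRe (x * y) = qRe x * qRe y - qIm1 x * qIm1 y - qIm2 x * qIm2 y - qIm3 x * qIm3 y"
  "qIm1 (x * y) = qRe x * qIm1 y + qIm1 x * qRe y + qIm2 x * qIm3 y - qIm3 x * qIm2 y"
  "qIm2 (x * y) = qRe x * qIm2 y - qIm1 x * qIm3 y + qIm2 x * qRe y + qIm3 x * qIm1 y"
  "qIm3 (x * y) = qRe x * qIm3 y + qIm1 x * qIm2 y - qIm2 x * qIm1 y + qIm3 x * qRe y"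
  by (simp_all add: one_quat_def times_quat_def)

definition qcnj :: "quat \<Rightarrow> quat" where
  "qcnj x = Quat (qRe x) (- qIm1 x) (- qIm2 x) (- qIm3 x)"

lemma qcnj_simps [simp]:
  "qRe (qcnj x) = qRe x" "qIm1 (qcnj x) = - qIm1 x" "qIm2 (qcnj x) = - qIm2 x" "qIm3 (qcnj x) = - qIm3 x"
  by (simp_all add: qcnj_def)

definition qnormsq :: "quat \<Rightarrow> real" where
  "qnormsq x = (qRe x)\<^sup>2 + (qIm1 x)\<^sup>2 + (qIm2 x)\<^sup>2 + (qIm3 x)\<^sup>2"

instantiation quat :: division_ring
begin
definition "inverse x = scaleR (inverse (qnormsq x)) (qcnj x)"
definition "x div y = x * inverse (y :: quat)"
instance
proof
  fix x y :: quat
  assume "x \<noteq> 0"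
  then have n: "qnormsq x \<noteq> 0"
    by (auto simp: qnormsq_def quat_eq_iff add_nonneg_eq_0_iff)
  have sl: "scaleR r a * b = scaleR r (a * b)" "a * scaleR r b = scaleR r (a * b)" for r and a b :: quat
    by (simp_all add: quat_eq_iff algebra_simps)
  have c1: "qcnj x * x = Quat (qnormsq x) 0 0 0" "x * qcnj x = Quat (qnormsq x) 0 0 0"
    by (simp_all add: quat_eq_iff qnormsq_def power2_eq_square algebra_simps)
  show "inverse x * x = 1"
    using n by (simp add: inverse_quat_def sl c1 quat_eq_iff)
  show "x * inverse x = 1"
    using n by (simp add: inverse_quat_def sl c1 quat_eq_iff)
next
  fix x y :: quat
  show "x div y = x * inverse y" by (simp add: divide_quat_def)
next
  show "inverse (0::quat) = 0" by (simp add: inverse_quat_def quat_eq_iff)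
qed
end

text \<open>Embedding into a Euclidean space, used only to transfer the triangle inequality.\<close>

definition qvec :: "quat \<Rightarrow> (real \<times> real) \<times> (real \<times> real)" where
  "qvec x = ((qRe x, qIm1 x), (qIm2 x, qIm3 x))"

instantiation quat :: real_normed_div_algebra
begin
definition "norm x = sqrt (qnormsq x)"
definition "sgn x = x /\<^sub>R norm (x::quat)"
definition "dist x y = norm (x - y :: quat)"
definition uniformity_quat_def [code del]:
  "(uniformity :: (quat \<times> quat) filter) = (INF e\<in>{0 <..}. principal {(x, y). dist x y < e})"
definition open_quat_def [code del]:
  "open (U :: quat set) \<longleftrightarrow> (\<forall>x\<in>U. eventually (\<lambda>(x', y). x' = x \<longrightarrow> y \<in> U) uniformity)"
instance
proof
  fix r :: real and x y :: quat
  have nv: "norm z = norm (qvec z)" for z :: quat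
    by (simp add: norm_quat_def qvec_def norm_Pair qnormsq_def real_sqrt_sum_squares_triangle_ineq add.assoc)
  show "(norm x = 0) = (x = 0)"
    by (auto simp: norm_quat_def qnormsq_def quat_eq_iff add_nonneg_eq_0_iff)
  have "qvec (x + y) = qvec x + qvec y" by (simp add: qvec_def)
  then show "norm (x + y) \<le> norm x + norm y"
    by (simp add: nv norm_triangle_ineq)
  show "norm (scaleR r x) = \<bar>r\<bar> * norm x"
    by (simp add: norm_quat_def qnormsq_def power_mult_distrib distrib_left [symmetric] real_sqrt_mult)
  show "norm (x * y) = norm x * norm y"
    by (simp add: norm_quat_def qnormsq_def real_sqrt_mult [symmetric] power2_eq_square algebra_simps)
  show "scaleR r x * y = scaleR r (x * y)" by (simp add: quat_eq_iff algebra_simps)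
  show "x * scaleR r y = scaleR r (x * y)" by (simp add: quat_eq_iff algebra_simps)
qed (rule sgn_quat_def dist_quat_def open_quat_def uniformity_quat_def)+
end

lemma dist_quat_qvec: "dist x y = dist (qvec x) (qvec y)"
  by (simp add: dist_quat_def dist_norm norm_quat_def qvec_def norm_Pair qnormsq_def add.assoc)

instance quat :: banach
proof
  fix X :: "nat \<Rightarrow> quat"
  assume "Cauchy X"
  then have "Cauchy (\<lambda>n. qvec (X n))"
    by (simp add: Cauchy_def dist_quat_qvec)
  then obtain L where L: "(\<lambda>n. qvec (X n)) \<longlonglongrightarrow> L"
    using Cauchy_convergent_iff convergent_def by blast
  define q where "q = Quat (fst (fst L)) (snd (fst L)) (fst (snd L)) (snd (snd L))"
  have "qvec q = L" by (simp add: q_def qvec_def)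
  then have "X \<longlonglongrightarrow> q"
    using L by (simp add: lim_sequentially dist_quat_qvec)
  then show "convergent X" by (rule convergentI)
qed

definition qball :: "quat set" where
  "qball = {a. norm a < 1}"

text \<open>Pick matrix of f at the points z 0, ..., z (n-1), as a function of the indices
  (only entries with i, j < n are meaningful).\<close>
definition pick_matrix :: "(quat \<Rightarrow> quat) \<Rightarrow> (nat \<Rightarrow> quat) \<Rightarrow> nat \<Rightarrow> nat \<Rightarrow> quat" where
  "pick_matrix f z i j =
     (\<Sum>k. z i ^ k * (1 - f (z i) * qcnj (f (z j))) * qcnj (z j) ^ k)"

definition quat_nonneg :: "quat \<Rightarrow> bool" where
  "quat_nonneg q \<longleftrightarrow> q \<in> \<real> \<and> 0 \<le> qRe q"

definition quat_psd :: "nat \<Rightarrow> (nat \<Rightarrow> nat \<Rightarrow> quat) \<Rightarrow> bool" where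
  "quat_psd n A \<longleftrightarrow>
     (\<forall>i<n. \<forall>j<n. A i j = qcnj (A j i)) \<and>
     (\<forall>x :: nat \<Rightarrow> quat. quat_nonneg (\<Sum>i<n. \<Sum>j<n. qcnj (x i) * A i j * x j))"

definition left_schur_class :: "(quat \<Rightarrow> quat) set" where
  "left_schur_class = {f. \<exists>c :: nat \<Rightarrow> quat.
      limsup (\<lambda>k. ereal (root k (norm (c k)))) \<le> 1 \<and>
      (\<forall>z\<in>qball. summable (\<lambda>k. norm (z ^ k * c k)) \<and> f z = (\<Sum>k. z ^ k * c k)) \<and>
      (\<forall>z\<in>qball. norm (f z) \<le> 1)}"

end

theory Submission
  imports Defs "HOL-Complex_Analysis.Complex_Analysis"
begin

text \<open>
  The proof reduces to the classical theory on the
  complex slice C = R + iR inside H: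

  (1) Complex part. If all 3 x 3 matrices of the Pick kernel of a function phi on the unit disc
      are positive semidefinite, then |phi| <= 1; phi is constant if |phi(a)| = 1 for some a;
      otherwise one step of the Schur algorithm at a yields a function (the Schur quotient)
      whose 2 x 2 Pick matrices are positive. The resulting two-point estimate makes the Schur
      quotient Lipschitz near a, so it has a limit at a, and the difference quotient of phi at a,
      which is an explicit expression in the Schur quotient, converges. So phi is holomorphic,
      and Cauchy's estimate bounds its Taylor coefficients by 1.
  (2) Quaternionic part. The Pick quadratic form equals
      sum_k |sum_s x_s' z_s^k|^2 - |sum_s x_s' z_s^k f(z_s)|^2, which lets us show that both
      complex components of f restricted to the slice satisfy (1). Thus f has a power series
      with coefficients bounded by 2 on the slice.
  (3) Representation formula. Each z in the ball lies on a slice x + yI with I^2 = -1; with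
      zeta = x + iy, every power z^k is one fixed quaternionic combination of zeta^k and
      conj(zeta)^k, and positivity of the Pick matrix at (zeta, conj zeta, z) forces f(z) to be
      the same combination of f(zeta) and f(conj zeta). So the slice series represents f on the
      whole ball. Bounded coefficients give the root test bound and absolute convergence,
      which completes the proof.
\<close>

section \<open>Complex functions with positive Pick matrices\<close>

lemma sum_lessThan_3: "(\<Sum>s<(3::nat). h s) = h 0 + h 1 + h 2"
  by (simp add: eval_nat_numeral)

text \<open>Products of a point of the open ball with one of the closed ball stay in the open ball;
  this keeps all Moebius denominators 1 - a' z away from 0.\<close>
lemma norm_mult_less_one:
  fixes a b :: "'a::real_normed_div_algebra"
  assumes "norm a < 1" "norm b \<le> 1"
  shows "norm (a * b) < 1"
proof -
  have "norm a * norm b \<le> norm a" using assms(2) by (simp add: mult_left_le)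
  then show ?thesis using assms(1) by (simp add: norm_mult)
qed

lemma one_minus_cnj_mult_nonzero:
  assumes "cmod x < 1" "cmod y \<le> 1"
  shows "1 - cnj x * y \<noteq> 0"
  using norm_mult_less_one[of "cnj x" y] assms by auto

lemma one_minus_norm_le_norm_one_minus_mult:
  assumes "cmod u \<le> 1"
  shows "1 - cmod s \<le> cmod (1 - s * u)"
proof -
  have "cmod (s * u) \<le> cmod s" using assms by (simp add: norm_mult mult_left_le)
  then show ?thesis by (metis norm_one norm_triangle_ineq2 order_trans diff_left_mono)
qed

definition pick_kernel :: "complex \<Rightarrow> complex \<Rightarrow> complex \<Rightarrow> complex \<Rightarrow> complex" where
  "pick_kernel s t p q = (1 - p * cnj q) / (1 - s * cnj t)"

lemma pick_kernel_diag: "pick_kernel s s p p = of_real ((1 - (cmod p)\<^sup>2) / (1 - (cmod s)\<^sup>2))"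
  unfolding pick_kernel_def complex_norm_square[symmetric] by simp

lemma pick_kernel_swap: "pick_kernel t s q p = cnj (pick_kernel s t p q)"
  unfolding pick_kernel_def by (simp add: mult.commute)

lemma hermitian_2x2_psd:
  fixes a c :: real and B :: complex
  assumes "\<And>y1 y2. 0 \<le> Re (cnj y1 * y1 * a + cnj y1 * y2 * B + cnj y2 * y1 * cnj B + cnj y2 * y2 * c)"
  shows "0 \<le> a" "0 \<le> c" "(cmod B)\<^sup>2 \<le> a * c"
proof -
  have norm_sq: "cmod B * cmod B = Re B * Re B + Im B * Im B"
    by (metis cmod_power2 power2_eq_square)
  show a0: "0 \<le> a" using assms[of 1 0] by simp
  show c0: "0 \<le> c" using assms[of 0 1] by simp
  show "(cmod B)\<^sup>2 \<le> a * c"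
  proof (cases "c = 0")
    case False
    then have cp: "c > 0" using c0 by simp
    have "0 \<le> Re (cnj (of_real c) * of_real c * a + cnj (of_real c) * (- cnj B) * B
        + cnj (- cnj B) * of_real c * cnj B + cnj (- cnj B) * (- cnj B) * c)"
      using assms by blast
    also have "\<dots> = c * (a * c - (cmod B)\<^sup>2)"
      by (simp add: norm_sq algebra_simps power2_eq_square)
    finally show ?thesis using cp by (simp add: zero_le_mult_iff)
  next
    case True
    show ?thesis
    proof (rule ccontr)
      assume "\<not> ?thesis"
      then have Bp: "(cmod B)\<^sup>2 > 0" using True by simp
      define t where "t = (a + 1) / (cmod B)\<^sup>2"
      have "0 \<le> Re (cnj 1 * 1 * a + cnj 1 * (- of_real t * cnj B) * B
          + cnj (- of_real t * cnj B) * 1 * cnj B + cnj (- of_real t * cnj B) * (- of_real t * cnj B) * c)"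
        using assms by blast
      also have "\<dots> = a - 2 * t * (cmod B)\<^sup>2"
        using True by (simp add: norm_sq algebra_simps power2_eq_square)
      also have "\<dots> = a - 2 * (a + 1)" using Bp by (simp add: t_def)
      finally show False using a0 by simp
    qed
  qed
qed

lemma norm_one_minus_mult_cnj_sq:
  "(cmod (1 - u * cnj v))\<^sup>2 = (1 - (cmod u)\<^sup>2) * (1 - (cmod v)\<^sup>2) + (cmod (u - v))\<^sup>2"
  by (simp only: cmod_power2) (simp add: algebra_simps power2_eq_square)

text \<open>The off-diagonal bound |k(z,w)|^2 <= k(z,z) k(w,w) for the Pick kernel, for values in the
  closed disc, gives a Lipschitz-type estimate (it is the Schwarz--Pick inequality in disguise).\<close>
lemma pick_kernel_two_point_estimate:
  assumes z: "cmod z < 1" and w: "cmod w < 1" and u: "cmod u \<le> 1" and v: "cmod v \<le> 1"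
    and cs: "(cmod (pick_kernel z w u v))\<^sup>2
              \<le> (1 - (cmod u)\<^sup>2) / (1 - (cmod z)\<^sup>2) * ((1 - (cmod v)\<^sup>2) / (1 - (cmod w)\<^sup>2))"
  shows "cmod (u - v) * cmod (1 - z * cnj w) \<le> 2 * cmod (z - w)"
proof -
  define P where "P = (cmod (1 - u * cnj v))\<^sup>2"
  define Q where "Q = (cmod (1 - z * cnj w))\<^sup>2"
  define Puv where "Puv = (1 - (cmod u)\<^sup>2) * (1 - (cmod v)\<^sup>2)"
  define Pzw where "Pzw = (1 - (cmod z)\<^sup>2) * (1 - (cmod w)\<^sup>2)"
  define d where "d = (cmod (u - v))\<^sup>2"
  define e where "e = (cmod (z - w))\<^sup>2"
  have "1 - (cmod z)\<^sup>2 > 0" "1 - (cmod w)\<^sup>2 > 0"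
    using z w by (simp_all add: abs_square_less_1)
  then have Pzw0: "Pzw > 0" by (simp add: Pzw_def)
  have "1 - z * cnj w \<noteq> 0"
    using one_minus_cnj_mult_nonzero[of w z] w z by (simp add: mult.commute)
  then have Q0: "Q > 0" by (simp add: Q_def)
  have "(cmod (pick_kernel z w u v))\<^sup>2 = P / Q"
    by (simp add: pick_kernel_def P_def Q_def norm_divide power_divide)
  moreover have "(1 - (cmod u)\<^sup>2) / (1 - (cmod z)\<^sup>2) * ((1 - (cmod v)\<^sup>2) / (1 - (cmod w)\<^sup>2)) = Puv / Pzw"
    by (simp add: Puv_def Pzw_def)
  ultimately have "P / Q \<le> Puv / Pzw" using cs by simp
  then have "P * Pzw \<le> Puv * Q" using Q0 Pzw0 by (simp add: divide_simps mult.commute)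
  moreover have "Q = Pzw + e"
    unfolding Q_def Pzw_def e_def by (rule norm_one_minus_mult_cnj_sq)
  moreover have "P = Puv + d"
    unfolding P_def Puv_def d_def by (rule norm_one_minus_mult_cnj_sq)
  ultimately have "d * Q \<le> P * e" by (simp add: algebra_simps)
  also have "P \<le> 4"
  proof -
    have "cmod (1 - u * cnj v) \<le> 1 + cmod u * cmod v"
      by (metis norm_triangle_ineq4 norm_one norm_mult complex_mod_cnj)
    also have "\<dots> \<le> 2" using u v by (smt (verit) mult_le_one norm_ge_zero)
    finally have "cmod (1 - u * cnj v) \<le> 2" .
    then have "(cmod (1 - u * cnj v))\<^sup>2 \<le> 2\<^sup>2" by (rule power_mono) simp
    then show ?thesis unfolding P_def by simp
  qed
  then have "P * e \<le> 4 * e" by (simp add: e_def mult_right_mono)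
  finally have "(cmod (u - v) * cmod (1 - z * cnj w))\<^sup>2 \<le> (2 * cmod (z - w))\<^sup>2"
    by (simp add: d_def Q_def e_def power_mult_distrib)
  then show ?thesis by (rule power2_le_imp_le) simp
qed

definition pick_form2 :: "(complex \<Rightarrow> complex) \<Rightarrow> complex \<Rightarrow> complex \<Rightarrow> complex \<Rightarrow> complex \<Rightarrow> complex" where
  "pick_form2 \<phi> z w y1 y2 =
     cnj y1 * y1 * pick_kernel z z (\<phi> z) (\<phi> z) + cnj y1 * y2 * pick_kernel z w (\<phi> z) (\<phi> w)
   + cnj y2 * y1 * pick_kernel w z (\<phi> w) (\<phi> z) + cnj y2 * y2 * pick_kernel w w (\<phi> w) (\<phi> w)"

definition pick_form3 ::
    "(complex \<Rightarrow> complex) \<Rightarrow> complex \<Rightarrow> complex \<Rightarrow> complex \<Rightarrow> complex \<Rightarrow> complex \<Rightarrow> complex \<Rightarrow> complex" where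
  "pick_form3 \<phi> p0 p1 p2 x0 x1 x2 =
     cnj x0 * x0 * pick_kernel p0 p0 (\<phi> p0) (\<phi> p0) + cnj x0 * x1 * pick_kernel p0 p1 (\<phi> p0) (\<phi> p1)
       + cnj x0 * x2 * pick_kernel p0 p2 (\<phi> p0) (\<phi> p2)
   + (cnj x1 * x0 * pick_kernel p1 p0 (\<phi> p1) (\<phi> p0) + cnj x1 * x1 * pick_kernel p1 p1 (\<phi> p1) (\<phi> p1)
       + cnj x1 * x2 * pick_kernel p1 p2 (\<phi> p1) (\<phi> p2))
   + (cnj x2 * x0 * pick_kernel p2 p0 (\<phi> p2) (\<phi> p0) + cnj x2 * x1 * pick_kernel p2 p1 (\<phi> p2) (\<phi> p1)
       + cnj x2 * x2 * pick_kernel p2 p2 (\<phi> p2) (\<phi> p2))"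

lemma pick_two_point:
  assumes z: "cmod z < 1" and w: "cmod w < 1" and psd: "\<And>y1 y2. 0 \<le> Re (pick_form2 \<phi> z w y1 y2)"
  shows "cmod (\<phi> z) \<le> 1" "cmod (\<phi> w) \<le> 1"
    "cmod (\<phi> z - \<phi> w) * cmod (1 - z * cnj w) \<le> 2 * cmod (z - w)"
proof -
  note psd2 = hermitian_2x2_psd[of "(1 - (cmod (\<phi> z))\<^sup>2) / (1 - (cmod z)\<^sup>2)" "pick_kernel z w (\<phi> z) (\<phi> w)"
      "(1 - (cmod (\<phi> w))\<^sup>2) / (1 - (cmod w)\<^sup>2)"]
  note P = psd2[OF psd[unfolded pick_form2_def pick_kernel_diag pick_kernel_swap[of w z]]]
  have "1 - (cmod z)\<^sup>2 > 0" "1 - (cmod w)\<^sup>2 > 0"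
    using z w by (simp_all add: abs_square_less_1)
  then have "1 - (cmod (\<phi> z))\<^sup>2 \<ge> 0" "1 - (cmod (\<phi> w))\<^sup>2 \<ge> 0"
    using P(1,2) by (simp_all add: zero_le_divide_iff)
  then show u: "cmod (\<phi> z) \<le> 1" and v: "cmod (\<phi> w) \<le> 1" by (simp_all add: abs_square_le_1)
  show "cmod (\<phi> z - \<phi> w) * cmod (1 - z * cnj w) \<le> 2 * cmod (z - w)"
    by (rule pick_kernel_two_point_estimate[OF z w u v P(3)])
qed

definition complex_pick3 :: "(complex \<Rightarrow> complex) \<Rightarrow> bool" where
  "complex_pick3 \<phi> \<longleftrightarrow> (\<forall>p x. (\<forall>s<(3::nat). cmod (p s) < 1) \<longrightarrow>
      0 \<le> Re (\<Sum>s<3. \<Sum>t<3. cnj (x s) * x t * pick_kernel (p s) (p t) (\<phi> (p s)) (\<phi> (p t))))"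

lemma complex_pick3D:
  assumes "complex_pick3 \<phi>" "cmod p0 < 1" "cmod p1 < 1" "cmod p2 < 1"
  shows "0 \<le> Re (pick_form3 \<phi> p0 p1 p2 x0 x1 x2)"
proof -
  define p where "p = (\<lambda>i::nat. if i = 0 then p0 else if i = 1 then p1 else p2)"
  define x where "x = (\<lambda>i::nat. if i = 0 then x0 else if i = 1 then x1 else x2)"
  have "\<forall>s<3. cmod (p s) < 1" using assms by (auto simp: p_def)
  then have "0 \<le> Re (\<Sum>s<3. \<Sum>t<3. cnj (x s) * x t * pick_kernel (p s) (p t) (\<phi> (p s)) (\<phi> (p t)))"
    using assms(1) unfolding complex_pick3_def by blast
  then show ?thesis by (simp add: sum_lessThan_3 p_def x_def pick_form3_def)
qed

text \<open>Taking x2 = 0 shows that the 2 x 2 Pick matrices are positive as well.\<close>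
lemma complex_pick3_two_point:
  assumes "complex_pick3 \<phi>" "cmod z < 1" "cmod w < 1"
  shows "0 \<le> Re (pick_form2 \<phi> z w y1 y2)"
  using complex_pick3D[OF assms(1,2,3,3), of y1 y2 0] by (simp add: pick_form3_def pick_form2_def)

lemma complex_pick3_bound:
  assumes "complex_pick3 \<phi>" "cmod z < 1"
  shows "cmod (\<phi> z) \<le> 1"
  using pick_two_point(1)[OF assms(2) assms(2) complex_pick3_two_point[OF assms(1,2,2)]] .

text \<open>Maximum principle: if |phi| attains the value 1 inside the disc, then phi is constant,
  since the corresponding diagonal entry of the Pick matrix vanishes.\<close>
lemma complex_pick3_unimodular_const:
  assumes pc: "complex_pick3 \<phi>" and a: "cmod a < 1" and w: "cmod w < 1" and fa: "cmod (\<phi> a) = 1"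
  shows "\<phi> w = \<phi> a"
proof -
  have "\<And>y1 y2. 0 \<le> Re (cnj y1 * y1 * (0::real) + cnj y1 * y2 * pick_kernel a w (\<phi> a) (\<phi> w)
      + cnj y2 * y1 * cnj (pick_kernel a w (\<phi> a) (\<phi> w))
      + cnj y2 * y2 * ((1 - (cmod (\<phi> w))\<^sup>2) / (1 - (cmod w)\<^sup>2)))"
    using complex_pick3_two_point[OF pc a w] fa
    by (simp add: pick_form2_def pick_kernel_diag pick_kernel_swap[of w a])
  from hermitian_2x2_psd(3)[OF this] have "pick_kernel a w (\<phi> a) (\<phi> w) = 0" by simp
  moreover have "1 - a * cnj w \<noteq> 0"
    using one_minus_cnj_mult_nonzero[of w a] a w by (simp add: mult.commute)
  ultimately have e: "\<phi> a * cnj (\<phi> w) = 1" by (simp add: pick_kernel_def)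
  have "cnj (\<phi> a) * (\<phi> a * cnj (\<phi> w)) = cnj (\<phi> w)"
    using fa by (simp add: mult.assoc[symmetric] complex_norm_square[symmetric] mult.commute[of "cnj _"])
  then show ?thesis using e by simp
qed

section \<open>One step of the Schur algorithm\<close>

text \<open>Moebius maps of the disc transform the Pick kernel by a positive factor.\<close>
lemma mobius_kernel_identity:
  fixes c x y :: complex
  assumes "1 - cnj c * x \<noteq> 0" "1 - cnj c * y \<noteq> 0"
  shows "1 - ((x - c) / (1 - cnj c * x)) * cnj ((y - c) / (1 - cnj c * y)) =
     (1 - c * cnj c) * (1 - x * cnj y) / ((1 - cnj c * x) * cnj (1 - cnj c * y))"
proof -
  have n: "1 - c * cnj y \<noteq> 0"
    using assms(2) by (metis complex_cnj_cnj complex_cnj_diff complex_cnj_mult complex_cnj_one complex_cnj_zero_iff)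
  have e: "cnj ((y - c) / (1 - cnj c * y)) = (cnj y - cnj c) / (1 - c * cnj y)" by simp
  have "1 - ((x - c) / (1 - cnj c * x)) * cnj ((y - c) / (1 - cnj c * y)) =
     ((1 - cnj c * x) * (1 - c * cnj y) - (x - c) * (cnj y - cnj c)) / ((1 - cnj c * x) * (1 - c * cnj y))"
    unfolding e using assms(1) n by (simp add: divide_simps)
  also have "(1 - cnj c * x) * (1 - c * cnj y) - (x - c) * (cnj y - cnj c) = (1 - c * cnj c) * (1 - x * cnj y)"
    by (simp add: algebra_simps)
  finally show ?thesis by simp
qed

lemma schur_kernel_identity:
  fixes a b s t u v :: complex
  assumes a: "cmod a < 1" and b: "cmod b < 1" and s: "cmod s < 1" "s \<noteq> a" and t: "cmod t < 1" "t \<noteq> a"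
    and u: "cmod u \<le> 1" and v: "cmod v \<le> 1"
  defines "\<alpha> \<equiv> \<lambda>x. 1 - cnj a * x" and "\<beta> \<equiv> \<lambda>y. 1 - cnj b * y"
  defines "A \<equiv> \<lambda>x. (x - a) / \<alpha> x" and "X \<equiv> \<lambda>y. (y - b) / \<beta> y"
  shows "pick_kernel s t (X u / A s) (X v / A t) * A s * cnj (A t)
     = (1 - b * cnj b) * pick_kernel s t u v / (\<beta> u * cnj (\<beta> v)) - (1 - a * cnj a) / (\<alpha> s * cnj (\<alpha> t))"
proof -
  have \<alpha>: "\<alpha> s \<noteq> 0" "\<alpha> t \<noteq> 0"
    unfolding \<alpha>_def using one_minus_cnj_mult_nonzero[OF a] s t by simp_all
  have \<beta>: "\<beta> u \<noteq> 0" "\<beta> v \<noteq> 0"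
    unfolding \<beta>_def using one_minus_cnj_mult_nonzero[OF b] u v by simp_all
  have A: "A s \<noteq> 0" "A t \<noteq> 0" using \<alpha> s t by (simp_all add: A_def)
  have D: "1 - s * cnj t \<noteq> 0" using one_minus_cnj_mult_nonzero[of t s] s t by (simp add: mult.commute)
  have "pick_kernel s t (X u / A s) (X v / A t) * A s * cnj (A t) = (A s * cnj (A t) - X u * cnj (X v)) / (1 - s * cnj t)"
    unfolding pick_kernel_def using A D by (simp add: field_simps)
  also have "A s * cnj (A t) - X u * cnj (X v) = (1 - X u * cnj (X v)) - (1 - A s * cnj (A t))" by simp
  also have "\<dots> = (1 - b * cnj b) * (1 - u * cnj v) / (\<beta> u * cnj (\<beta> v))
                 - (1 - a * cnj a) * (1 - s * cnj t) / (\<alpha> s * cnj (\<alpha> t))"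
    using mobius_kernel_identity[of a s t] mobius_kernel_identity[of b u v] \<alpha> \<beta>
    by (simp add: A_def X_def \<alpha>_def \<beta>_def)
  finally show ?thesis unfolding pick_kernel_def using D by (simp add: field_simps)
qed

text \<open>Entry-wise form of the congruence relating the 3 x 3 Pick form of phi at (a, s, t) to the
  2 x 2 Pick form of the Schur quotient at (s, t); K is the kernel of phi, G that of the quotient.\<close>
lemma schur_congruence_entry:
  fixes G K As At Bs Bt \<alpha>s \<alpha>t nb na vs vt :: complex
  assumes E: "G * As * cnj At = nb * K / (Bs * cnj Bt) - na / (\<alpha>s * cnj \<alpha>t)" and nb: "cnj nb = nb"
    and nz: "Bs \<noteq> 0" "Bt \<noteq> 0" "\<alpha>s \<noteq> 0" "\<alpha>t \<noteq> 0"
  shows "cnj (vs * nb / cnj Bs) * (vt * nb / cnj Bt) * K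
    = nb * (cnj (vs * cnj As) * (vt * cnj At) * G) + nb * na * (cnj (vs / cnj \<alpha>s) * (vt / cnj \<alpha>t))"
proof -
  have "cnj (vs * cnj As) * (vt * cnj At) * G = cnj vs * vt * (G * As * cnj At)" by (simp add: algebra_simps)
  also have "\<dots> = cnj vs * vt * (nb * K / (Bs * cnj Bt) - na / (\<alpha>s * cnj \<alpha>t))" by (simp add: E)
  finally have e: "cnj (vs * cnj As) * (vt * cnj At) * G = \<dots>" .
  show ?thesis unfolding e using nz nb by (simp add: field_simps)
qed

text \<open>Summing the entries: with x0 = -na (m1 + m2), the 3 x 3 form in (x0, x1, x2) equals nb times
  the 2 x 2 form in (y1, y2); the first row and column of the 3 x 3 matrix only contribute a
  perfect square that cancels.\<close>
lemma schur_congruence: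
  fixes x0 x1 x2 y1 y2 m1 m2 nb na K00 K01 K02 K10 K11 K12 K20 K21 K22 G11 G12 G21 G22 :: complex
  assumes t11: "cnj x1 * x1 * K11 = nb * (cnj y1 * y1 * G11) + nb * na * (cnj m1 * m1)"
    and t12: "cnj x1 * x2 * K12 = nb * (cnj y1 * y2 * G12) + nb * na * (cnj m1 * m2)"
    and t21: "cnj x2 * x1 * K21 = nb * (cnj y2 * y1 * G21) + nb * na * (cnj m2 * m1)"
    and t22: "cnj x2 * x2 * K22 = nb * (cnj y2 * y2 * G22) + nb * na * (cnj m2 * m2)"
    and c01: "x1 * K01 = nb * m1" and c02: "x2 * K02 = nb * m2"
    and c10: "cnj x1 * K10 = nb * cnj m1" and c20: "cnj x2 * K20 = nb * cnj m2"
    and k00: "K00 * na = nb" and x0: "x0 = - (na * (m1 + m2))" and na: "cnj na = na"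
  shows "cnj x0 * x0 * K00 + cnj x0 * x1 * K01 + cnj x0 * x2 * K02
    + (cnj x1 * x0 * K10 + cnj x1 * x1 * K11 + cnj x1 * x2 * K12)
    + (cnj x2 * x0 * K20 + cnj x2 * x1 * K21 + cnj x2 * x2 * K22)
    = nb * (cnj y1 * y1 * G11 + cnj y1 * y2 * G12 + cnj y2 * y1 * G21 + cnj y2 * y2 * G22)"
proof -
  have cx0: "cnj x0 = - (na * (cnj m1 + cnj m2))" using x0 na by simp
  have e1: "cnj x0 * x0 * K00 = na * nb * ((cnj m1 + cnj m2) * (m1 + m2))"
  proof -
    have "cnj x0 * x0 * K00 = (na * (cnj m1 + cnj m2)) * (m1 + m2) * (K00 * na)"
      unfolding cx0 x0 using na by (simp add: algebra_simps)
    then show ?thesis unfolding k00 by (simp add: algebra_simps)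
  qed
  have e2: "cnj x0 * x1 * K01 = - na * nb * ((cnj m1 + cnj m2) * m1)"
  proof -
    have "cnj x0 * x1 * K01 = cnj x0 * (x1 * K01)" by (simp add: mult.assoc)
    then show ?thesis unfolding c01 cx0 by (simp add: algebra_simps)
  qed
  have e3: "cnj x0 * x2 * K02 = - na * nb * ((cnj m1 + cnj m2) * m2)"
  proof -
    have "cnj x0 * x2 * K02 = cnj x0 * (x2 * K02)" by (simp add: mult.assoc)
    then show ?thesis unfolding c02 cx0 by (simp add: algebra_simps)
  qed
  have e4: "cnj x1 * x0 * K10 = - na * nb * (cnj m1 * (m1 + m2))"
  proof -
    have "cnj x1 * x0 * K10 = x0 * (cnj x1 * K10)" by (simp add: algebra_simps)
    then show ?thesis unfolding c10 x0 by (simp add: algebra_simps)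
  qed
  have e5: "cnj x2 * x0 * K20 = - na * nb * (cnj m2 * (m1 + m2))"
  proof -
    have "cnj x2 * x0 * K20 = x0 * (cnj x2 * K20)" by (simp add: algebra_simps)
    then show ?thesis unfolding c20 x0 by (simp add: algebra_simps)
  qed
  show ?thesis unfolding e1 e2 e3 e4 e5 t11 t12 t21 t22 by (simp add: algebra_simps)
qed

definition schur_quotient :: "(complex \<Rightarrow> complex) \<Rightarrow> complex \<Rightarrow> complex \<Rightarrow> complex" where
  "schur_quotient \<phi> a s = ((\<phi> s - \<phi> a) / (1 - cnj (\<phi> a) * \<phi> s)) / ((s - a) / (1 - cnj a * s))"

text \<open>The 2 x 2 form of the quotient in (y1, y2) is, up to the positive
  factor 1 - |phi(a)|^2, the 3 x 3 form of phi at (a, z, w) in a suitable vector (x0, x1, x2).\<close>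
lemma schur_step:
  assumes pc: "complex_pick3 \<phi>" and a: "cmod a < 1" and b: "cmod (\<phi> a) < 1"
    and z: "cmod z < 1" "z \<noteq> a" and w: "cmod w < 1" "w \<noteq> a"
  shows "0 \<le> Re (pick_form2 (schur_quotient \<phi> a) z w y1 y2)"
proof -
  define g where "g = schur_quotient \<phi> a"
  define nb where "nb = 1 - \<phi> a * cnj (\<phi> a)"
  define na where "na = 1 - a * cnj a"
  define \<alpha> where "\<alpha> x = 1 - cnj a * x" for x
  define \<beta> where "\<beta> x = 1 - cnj (\<phi> a) * \<phi> x" for x
  define A where "A x = (x - a) / \<alpha> x" for x
  have fb: "cmod (\<phi> s) \<le> 1" if "cmod s < 1" for s using complex_pick3_bound[OF pc that] .
  have \<alpha>nz: "\<alpha> s \<noteq> 0" if "cmod s < 1" for s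
    unfolding \<alpha>_def using one_minus_cnj_mult_nonzero[OF a] that by simp
  have \<beta>nz: "\<beta> s \<noteq> 0" if "cmod s < 1" for s
    unfolding \<beta>_def using one_minus_cnj_mult_nonzero[OF b fb[OF that]] .
  have Anz: "A s \<noteq> 0" if "cmod s < 1" "s \<noteq> a" for s using \<alpha>nz[OF that(1)] that(2) by (simp add: A_def)
  have E: "pick_kernel s t (g s) (g t) * A s * cnj (A t)
      = nb * pick_kernel s t (\<phi> s) (\<phi> t) / (\<beta> s * cnj (\<beta> t)) - na / (\<alpha> s * cnj (\<alpha> t))"
    if "cmod s < 1" "s \<noteq> a" "cmod t < 1" "t \<noteq> a" for s t
    unfolding g_def schur_quotient_def nb_def na_def \<alpha>_def \<beta>_def A_def
    by (rule schur_kernel_identity[OF a b that fb fb]) (use that in auto)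
  define v1 where "v1 = y1 / cnj (A z)"
  define v2 where "v2 = y2 / cnj (A w)"
  define x1 where "x1 = v1 * nb / cnj (\<beta> z)"
  define x2 where "x2 = v2 * nb / cnj (\<beta> w)"
  define m1 where "m1 = v1 / cnj (\<alpha> z)"
  define m2 where "m2 = v2 / cnj (\<alpha> w)"
  define x0 where "x0 = - (na * (m1 + m2))"
  have y1: "y1 = v1 * cnj (A z)" using Anz[OF z] by (simp add: v1_def)
  have y2: "y2 = v2 * cnj (A w)" using Anz[OF w] by (simp add: v2_def)
  have nbr: "cnj nb = nb" and nar: "cnj na = na" unfolding nb_def na_def by (simp_all add: mult.commute)
  note entry = schur_congruence_entry[OF E _ \<beta>nz \<beta>nz \<alpha>nz \<alpha>nz, OF _ _ _ _ nbr]
  have k0s: "pick_kernel a s (\<phi> a) (\<phi> s) = cnj (\<beta> s) / cnj (\<alpha> s)"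
   and ks0: "pick_kernel s a (\<phi> s) (\<phi> a) = \<beta> s / \<alpha> s" for s
    by (simp_all add: pick_kernel_def \<beta>_def \<alpha>_def mult.commute)
  have c\<beta>: "cnj (\<beta> z) \<noteq> 0" "cnj (\<beta> w) \<noteq> 0" using \<beta>nz[OF z(1)] \<beta>nz[OF w(1)] by auto
  have "pick_form3 \<phi> a z w x0 x1 x2 = nb * pick_form2 g z w y1 y2"
    unfolding pick_form3_def pick_form2_def
  proof (rule schur_congruence)
    show "cnj x1 * x1 * pick_kernel z z (\<phi> z) (\<phi> z)
        = nb * (cnj y1 * y1 * pick_kernel z z (g z) (g z)) + nb * na * (cnj m1 * m1)"
      unfolding x1_def m1_def y1 by (rule entry) (use z in auto)
    show "cnj x1 * x2 * pick_kernel z w (\<phi> z) (\<phi> w)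
        = nb * (cnj y1 * y2 * pick_kernel z w (g z) (g w)) + nb * na * (cnj m1 * m2)"
      unfolding x1_def x2_def m1_def m2_def y1 y2 by (rule entry) (use z w in auto)
    show "cnj x2 * x1 * pick_kernel w z (\<phi> w) (\<phi> z)
        = nb * (cnj y2 * y1 * pick_kernel w z (g w) (g z)) + nb * na * (cnj m2 * m1)"
      unfolding x1_def x2_def m1_def m2_def y1 y2 by (rule entry) (use z w in auto)
    show "cnj x2 * x2 * pick_kernel w w (\<phi> w) (\<phi> w)
        = nb * (cnj y2 * y2 * pick_kernel w w (g w) (g w)) + nb * na * (cnj m2 * m2)"
      unfolding x2_def m2_def y2 by (rule entry) (use w in auto)
    show "x1 * pick_kernel a z (\<phi> a) (\<phi> z) = nb * m1" "x2 * pick_kernel a w (\<phi> a) (\<phi> w) = nb * m2"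
      unfolding x1_def m1_def x2_def m2_def k0s using c\<beta> by (simp_all add: field_simps)
    show "cnj x1 * pick_kernel z a (\<phi> z) (\<phi> a) = nb * cnj m1" "cnj x2 * pick_kernel w a (\<phi> w) (\<phi> a) = nb * cnj m2"
      unfolding x1_def m1_def x2_def m2_def ks0 using \<beta>nz[OF z(1)] \<beta>nz[OF w(1)] nbr by (simp_all add: field_simps)
    show "pick_kernel a a (\<phi> a) (\<phi> a) * na = nb"
      using \<alpha>nz[OF a] unfolding pick_kernel_def by (simp add: na_def nb_def \<alpha>_def mult.commute)
  qed (simp_all add: x0_def nar)
  moreover have "0 \<le> Re (pick_form3 \<phi> a z w x0 x1 x2)" by (rule complex_pick3D[OF pc a z(1) w(1)])
  moreover have "nb = of_real (1 - (cmod (\<phi> a))\<^sup>2)" unfolding nb_def complex_norm_square[symmetric] by simp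
  moreover have "1 - (cmod (\<phi> a))\<^sup>2 > 0" using b by (simp add: abs_square_less_1)
  ultimately show ?thesis by (simp add: g_def zero_le_mult_iff)
qed

section \<open>Holomorphy and power series in the complex case\<close>

lemma lipschitz_punctured_ball_limit:
  fixes g :: "'a::{real_normed_vector,perfect_space} \<Rightarrow> 'b::complete_space"
  assumes "lipschitz_on L (ball a r - {a}) g" "r > 0"
  obtains l where "(g \<longlongrightarrow> l) (at a)"
proof -
  have "a islimpt ball a r" using assms(2) by (simp add: islimpt_ball)
  then have "a \<in> closure (ball a r - {a})" using islimpt_in_closure by blast
  then obtain l where l: "(g \<longlongrightarrow> l) (at a within ball a r - {a})"
    using uniformly_continuous_on_extension_at_closure[OF lipschitz_on_uniformly_continuous[OF assms(1)]]
    by blast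
  have "at a within ball a r - {a} = at a"
    by (metis at_within_def Diff_idemp at_within_open open_ball centre_in_ball assms(2))
  then show ?thesis using l that by simp
qed

lemma norm_in_half_margin_ball:
  assumes "s \<in> ball a ((1 - cmod a) / 2)"
  shows "cmod s < 1 - (1 - cmod a) / 2"
proof -
  have "cmod s \<le> cmod a + cmod (s - a)" by (metis add.commute diff_add_cancel norm_triangle_ineq)
  also have "cmod (s - a) < (1 - cmod a) / 2" using assms by (simp add: dist_norm norm_minus_commute)
  finally show ?thesis by (simp add: field_simps)
qed

text \<open>The two-point estimate for the Schur quotient makes it Lipschitz near a.\<close>
lemma schur_quotient_lipschitz:
  assumes pc: "complex_pick3 \<phi>" and a: "cmod a < 1" and b: "cmod (\<phi> a) < 1"
  defines "r \<equiv> (1 - cmod a) / 2"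
  shows "lipschitz_on (2 / r) (ball a r - {a}) (schur_quotient \<phi> a)"
proof (rule lipschitz_onI)
  have r0: "r > 0" using a by (simp add: r_def)
  then show "0 \<le> 2 / r" by simp
  fix s t assume st: "s \<in> ball a r - {a}" "t \<in> ball a r - {a}"
  have inball: "cmod x < 1 - r" if "x \<in> ball a r" for x
    using norm_in_half_margin_ball that unfolding r_def .
  have s: "cmod s < 1" "s \<noteq> a" and t: "cmod t < 1" "t \<noteq> a"
    using st inball r0 by force+
  have "r \<le> 1 - cmod s" using inball st by force
  also have "\<dots> \<le> cmod (1 - s * cnj t)"
    by (rule one_minus_norm_le_norm_one_minus_mult) (use t in simp)
  finally have "cmod (schur_quotient \<phi> a s - schur_quotient \<phi> a t) * r \<le> 2 * cmod (s - t)"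
    using pick_two_point(3)[OF s(1) t(1) schur_step[OF pc a b s t]]
    by (meson mult_left_mono norm_ge_zero order_trans)
  then show "dist (schur_quotient \<phi> a s) (schur_quotient \<phi> a t) \<le> 2 / r * dist s t"
    using r0 by (simp add: dist_norm field_simps)
qed

text \<open>The difference quotient of phi at a, expressed through the Schur quotient g and the
  auxiliary function h(s) = (s - a) g(s) / (1 - a' s), which tends to 0 at a.\<close>
lemma schur_difference_quotient:
  assumes a: "cmod a < 1" and b: "cmod (\<phi> a) < 1" and s: "cmod s < 1" "s \<noteq> a" and fs: "cmod (\<phi> s) \<le> 1"
  defines "h \<equiv> (s - a) * schur_quotient \<phi> a s / (1 - cnj a * s)"
  shows "(\<phi> s - \<phi> a) / (s - a)
    = schur_quotient \<phi> a s * (1 - \<phi> a * cnj (\<phi> a)) / ((1 + cnj (\<phi> a) * h) * (1 - cnj a * s))"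
proof -
  define \<alpha> where "\<alpha> = 1 - cnj a * s"
  define \<beta> where "\<beta> = 1 - cnj (\<phi> a) * \<phi> s"
  have \<alpha>: "\<alpha> \<noteq> 0" unfolding \<alpha>_def using one_minus_cnj_mult_nonzero[OF a] s by simp
  have \<beta>: "\<beta> \<noteq> 0" unfolding \<beta>_def using one_minus_cnj_mult_nonzero[OF b fs] .
  have nb: "1 - \<phi> a * cnj (\<phi> a) \<noteq> 0"
    using one_minus_cnj_mult_nonzero[OF b, of "\<phi> a"] b by (simp add: mult.commute)
  have g: "schur_quotient \<phi> a s = ((\<phi> s - \<phi> a) / \<beta>) / ((s - a) / \<alpha>)"
    by (simp add: schur_quotient_def \<alpha>_def \<beta>_def)
  have "h = (\<phi> s - \<phi> a) / \<beta>" unfolding h_def g \<alpha>_def[symmetric] using \<alpha> s(2) by simp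
  then have h\<beta>: "h * \<beta> = \<phi> s - \<phi> a" using \<beta> by simp
  have "(1 + cnj (\<phi> a) * h) * \<beta> = \<beta> + cnj (\<phi> a) * (h * \<beta>)" by (simp add: algebra_simps)
  also have "\<dots> = \<beta> + cnj (\<phi> a) * (\<phi> s - \<phi> a)" by (simp only: h\<beta>)
  also have "\<dots> = 1 - \<phi> a * cnj (\<phi> a)" by (simp add: \<beta>_def algebra_simps)
  finally have den: "1 + cnj (\<phi> a) * h = (1 - \<phi> a * cnj (\<phi> a)) / \<beta>"
    using \<beta> by (simp add: eq_divide_eq)
  have "(\<phi> s - \<phi> a) / (s - a) = schur_quotient \<phi> a s * \<beta> / \<alpha>"
    unfolding g using \<alpha> \<beta> s(2) by (simp add: field_simps)
  also have "\<dots> = schur_quotient \<phi> a s * (1 - \<phi> a * cnj (\<phi> a))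
      / ((1 - \<phi> a * cnj (\<phi> a)) / \<beta> * \<alpha>)"
    using nb \<alpha> \<beta> by (simp add: field_simps)
  finally show ?thesis unfolding den \<alpha>_def .
qed

text \<open>At points where |phi| < 1, phi is complex differentiable: the Schur quotient has a limit
  at a, so the difference quotient converges.\<close>
lemma complex_pick3_differentiable:
  assumes pc: "complex_pick3 \<phi>" and a: "cmod a < 1" and b: "cmod (\<phi> a) < 1"
  shows "\<phi> field_differentiable (at a)"
proof -
  define r where "r = (1 - cmod a) / 2"
  define g where "g = schur_quotient \<phi> a"
  define h where "h s = (s - a) * g s / (1 - cnj a * s)" for s
  have r0: "r > 0" using a by (simp add: r_def)
  obtain l where gl: "(g \<longlongrightarrow> l) (at a)"
    using lipschitz_punctured_ball_limit[OF schur_quotient_lipschitz[OF pc a b, folded r_def g_def] r0] .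
  have \<alpha>a: "1 - cnj a * a \<noteq> 0" using one_minus_cnj_mult_nonzero[OF a, of a] a by simp
  have "(h \<longlongrightarrow> (a - a) * l / (1 - cnj a * a)) (at a)"
    unfolding h_def using \<alpha>a by (intro tendsto_intros gl)
  then have "(h \<longlongrightarrow> 0) (at a)" by simp
  then have lim: "((\<lambda>s. g s * (1 - \<phi> a * cnj (\<phi> a)) / ((1 + cnj (\<phi> a) * h s) * (1 - cnj a * s)))
      \<longlongrightarrow> l * (1 - \<phi> a * cnj (\<phi> a)) / ((1 + cnj (\<phi> a) * 0) * (1 - cnj a * a))) (at a)"
    using \<alpha>a by (intro tendsto_intros gl) simp_all
  have eq: "g s * (1 - \<phi> a * cnj (\<phi> a)) / ((1 + cnj (\<phi> a) * h s) * (1 - cnj a * s))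
      = (\<phi> s - \<phi> a) / (s - a)"
    if "s \<in> ball a r" "s \<noteq> a" for s
  proof -
    have s: "cmod s < 1" using norm_in_half_margin_ball[of s a] that r0 unfolding r_def by linarith
    show ?thesis unfolding g_def h_def
      by (rule schur_difference_quotient[OF a b s that(2) complex_pick3_bound[OF pc s], symmetric])
  qed
  have "((\<lambda>s. (\<phi> s - \<phi> a) / (s - a))
      \<longlongrightarrow> l * (1 - \<phi> a * cnj (\<phi> a)) / ((1 + cnj (\<phi> a) * 0) * (1 - cnj a * a))) (at a)"
    by (rule Lim_transform_within_open[OF lim open_ball _ eq]) (use r0 in auto)
  then show ?thesis
    unfolding field_differentiable_def has_field_derivative_iff by blast
qed

text \<open>Either |phi| = 1 somewhere and phi is constant, or |phi| < 1 everywhere and phi is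
  differentiable everywhere.\<close>
lemma complex_pick3_holomorphic:
  assumes pc: "complex_pick3 \<phi>"
  shows "\<phi> holomorphic_on ball 0 1"
proof (cases "\<exists>a. cmod a < 1 \<and> cmod (\<phi> a) = 1")
  case True
  then obtain a where a: "cmod a < 1" "cmod (\<phi> a) = 1" by blast
  have "(\<lambda>_. \<phi> a) holomorphic_on ball 0 1" by simp
  then show ?thesis
    by (rule holomorphic_transform) (use complex_pick3_unimodular_const[OF pc a(1) _ a(2)] in auto)
next
  case False
  show ?thesis unfolding holomorphic_on_def
  proof
    fix x assume "x \<in> ball (0::complex) 1"
    then have x: "cmod x < 1" by simp
    then have "cmod (\<phi> x) < 1" using complex_pick3_bound[OF pc x] False by (auto simp: less_le)
    then have "\<phi> field_differentiable (at x)" by (rule complex_pick3_differentiable[OF pc x])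
    then show "\<phi> field_differentiable (at x within ball 0 1)" by (rule field_differentiable_at_within)
  qed
qed

lemma unit_disc_taylor_coeff_bound:
  assumes hol: "\<phi> holomorphic_on ball 0 1" and bnd: "\<And>z. cmod z < 1 \<Longrightarrow> cmod (\<phi> z) \<le> 1"
  shows "cmod ((deriv ^^ k) \<phi> 0 / fact k) \<le> 1"
proof -
  have le: "cmod ((deriv ^^ k) \<phi> 0 / fact k) * \<rho> ^ k \<le> 1" if "\<rho> \<in> {0<..<1}" for \<rho>
  proof -
    have \<rho>: "0 < \<rho>" "\<rho> < 1" using that by auto
    have "\<phi> holomorphic_on cball 0 \<rho>" using hol by (rule holomorphic_on_subset) (use \<rho> in auto)
    then have "\<phi> holomorphic_on ball 0 \<rho>" "continuous_on (cball 0 \<rho>) \<phi>"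
      by (auto intro: holomorphic_on_subset holomorphic_on_imp_continuous_on)
    then have "cmod ((deriv ^^ k) \<phi> 0) \<le> fact k * 1 / \<rho> ^ k"
      by (rule Cauchy_inequality[OF _ _ \<rho>(1)]) (use \<rho> bnd in simp)
    then show ?thesis using \<rho> by (simp add: norm_divide field_simps)
  qed
  have "((\<lambda>\<rho>. cmod ((deriv ^^ k) \<phi> 0 / fact k) * \<rho> ^ k) \<longlongrightarrow> cmod ((deriv ^^ k) \<phi> 0 / fact k) * 1 ^ k)
      (at_left (1::real))"
    by (intro tendsto_intros)
  then have "cmod ((deriv ^^ k) \<phi> 0 / fact k) * 1 ^ k \<le> 1"
    by (rule tendsto_upperbound) (use eventually_at_left_real[of 0 "1::real"] le in \<open>auto elim: eventually_mono\<close>)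
  then show ?thesis by simp
qed

lemma complex_pick3_power_series:
  assumes pc: "complex_pick3 \<phi>"
  obtains c where "\<And>k. cmod (c k) \<le> 1" "\<And>z. cmod z < 1 \<Longrightarrow> (\<lambda>k. c k * z ^ k) sums \<phi> z"
proof
  have hol: "\<phi> holomorphic_on ball 0 1" by (rule complex_pick3_holomorphic[OF pc])
  show "cmod ((deriv ^^ k) \<phi> 0 / fact k) \<le> 1" for k
    by (rule unit_disc_taylor_coeff_bound[OF hol complex_pick3_bound[OF pc]])
  show "(\<lambda>k. (deriv ^^ k) \<phi> 0 / fact k * z ^ k) sums \<phi> z" if "cmod z < 1" for z
    using holomorphic_power_series[OF hol] that by simp
qed

section \<open>Quaternionic preliminaries\<close>

lemma qcnj_mult: "qcnj (a * b) = qcnj b * qcnj a"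
  by (simp add: quat_eq_iff algebra_simps)

lemma qcnj_add: "qcnj (a + b) = qcnj a + qcnj b"
  by (simp add: quat_eq_iff)

lemma qcnj_one [simp]: "qcnj 1 = 1" and qcnj_zero [simp]: "qcnj 0 = 0"
  by (simp_all add: quat_eq_iff)

lemma qcnj_qcnj [simp]: "qcnj (qcnj a) = a"
  by (simp add: quat_eq_iff)

lemma qcnj_power: "qcnj (a ^ k) = qcnj a ^ k"
  by (induction k) (simp_all add: qcnj_mult power_commutes)

lemma qcnj_sum: "qcnj (sum g A) = (\<Sum>i\<in>A. qcnj (g i))"
  by (induction A rule: infinite_finite_induct) (simp_all add: qcnj_add)

lemma norm_qcnj [simp]: "norm (qcnj a) = norm a"
  by (simp add: norm_quat_def qnormsq_def)

lemma qnormsq_norm: "qnormsq a = (norm a)\<^sup>2"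
  by (simp add: norm_quat_def qnormsq_def add_nonneg_nonneg)

lemma qRe_mult_qcnj: "qRe (a * qcnj a) = qnormsq a"
  by (simp add: qnormsq_def power2_eq_square)

lemma bounded_linear_qRe: "bounded_linear qRe"
proof (rule bounded_linear_intro[where K = 1])
  show "qRe (x + y) = qRe x + qRe y" "qRe (scaleR r x) = r *\<^sub>R qRe x" for x y r by simp_all
  show "norm (qRe x) \<le> norm x * 1" for x
  proof -
    have "sqrt ((qRe x)\<^sup>2) \<le> sqrt (qnormsq x)" unfolding qnormsq_def by (rule real_sqrt_le_mono) simp
    then show ?thesis by (simp add: norm_quat_def)
  qed
qed

text \<open>The complex slice: C embeds into H as R + iR, and every quaternion splits as
  q = q1 + q2 j with q1, q2 in the slice.\<close>
definition quat_of_complex :: "complex \<Rightarrow> quat" where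
  "quat_of_complex c = Quat (Re c) (Im c) 0 0"

definition quat_fst :: "quat \<Rightarrow> complex" where "quat_fst q = Complex (qRe q) (qIm1 q)"
definition quat_snd :: "quat \<Rightarrow> complex" where "quat_snd q = Complex (qIm2 q) (qIm3 q)"
definition quat_j :: quat where "quat_j = Quat 0 0 1 0"

lemma quat_of_complex_simps [simp]:
  "qRe (quat_of_complex c) = Re c" "qIm1 (quat_of_complex c) = Im c"
  "qIm2 (quat_of_complex c) = 0" "qIm3 (quat_of_complex c) = 0"
  by (simp_all add: quat_of_complex_def)

lemma quat_of_complex_one [simp]: "quat_of_complex 1 = 1"
  and quat_of_complex_zero [simp]: "quat_of_complex 0 = 0"
  by (simp_all add: quat_eq_iff)

lemma quat_of_complex_mult: "quat_of_complex (a * b) = quat_of_complex a * quat_of_complex b"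
  by (simp add: quat_eq_iff)

lemma quat_of_complex_add: "quat_of_complex (a + b) = quat_of_complex a + quat_of_complex b"
  by (simp add: quat_eq_iff)

lemma quat_of_complex_cnj: "quat_of_complex (cnj a) = qcnj (quat_of_complex a)"
  by (simp add: quat_eq_iff)

lemma quat_of_complex_power: "quat_of_complex (a ^ k) = quat_of_complex a ^ k"
  by (induction k) (simp_all add: quat_of_complex_mult)

lemma quat_of_complex_sum: "quat_of_complex (sum g A) = (\<Sum>i\<in>A. quat_of_complex (g i))"
  by (induction A rule: infinite_finite_induct) (simp_all add: quat_of_complex_add)

lemma norm_quat_of_complex [simp]: "norm (quat_of_complex a) = cmod a"
  by (simp add: norm_quat_def qnormsq_def cmod_def)

lemma bounded_linear_quat_of_complex: "bounded_linear quat_of_complex"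
  by (rule bounded_linear_intro[where K = 1]) (simp_all add: quat_of_complex_add, simp add: quat_eq_iff)

lemma quat_fst_mult: "quat_fst (quat_of_complex c * q) = c * quat_fst q"
  by (simp add: quat_fst_def complex_eq_iff)

lemma quat_snd_mult: "quat_snd (quat_of_complex c * q) = c * quat_snd q"
  by (simp add: quat_snd_def complex_eq_iff)

lemma quat_fst_sum: "quat_fst (sum g A) = (\<Sum>i\<in>A. quat_fst (g i))"
  by (induction A rule: infinite_finite_induct) (simp_all add: quat_fst_def complex_eq_iff)

lemma quat_snd_sum: "quat_snd (sum g A) = (\<Sum>i\<in>A. quat_snd (g i))"
  by (induction A rule: infinite_finite_induct) (simp_all add: quat_snd_def complex_eq_iff)

lemma qnormsq_fst_snd: "qnormsq q = (cmod (quat_fst q))\<^sup>2 + (cmod (quat_snd q))\<^sup>2"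
  by (simp add: qnormsq_def quat_fst_def quat_snd_def cmod_power2)

lemma quat_split: "q = quat_of_complex (quat_fst q) + quat_of_complex (quat_snd q) * quat_j"
  by (simp add: quat_eq_iff quat_fst_def quat_snd_def quat_j_def)

lemma norm_quat_j [simp]: "norm quat_j = 1"
  by (simp add: norm_quat_def qnormsq_def quat_j_def)

lemma pick_entry_summable:
  fixes zs zt c :: quat
  assumes "norm zs < 1" "norm zt < 1"
  shows "summable (\<lambda>k. zs ^ k * c * qcnj zt ^ k)"
proof (rule summable_comparison_test)
  have "norm zs * norm zt < 1" using norm_mult_less_one[of zs zt] assms by (simp add: norm_mult)
  then show "summable (\<lambda>k. norm c * (norm zs * norm zt) ^ k)"
    by (intro summable_mult summable_geometric) simp
  show "\<exists>N. \<forall>n\<ge>N. norm (zs ^ n * c * qcnj zt ^ n) \<le> norm c * (norm zs * norm zt) ^ n"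
    by (intro exI[of _ 0] allI impI) (simp add: norm_mult norm_power power_mult_distrib qcnj_power[symmetric])
qed

lemma pick_quadratic_form_sums:
  fixes Z X :: "nat \<Rightarrow> quat" and f :: "quat \<Rightarrow> quat"
  assumes Z: "\<forall>s<n. norm (Z s) < 1"
  shows "(\<lambda>k. qnormsq (\<Sum>s<n. qcnj (X s) * Z s ^ k) - qnormsq (\<Sum>s<n. qcnj (X s) * Z s ^ k * f (Z s)))
     sums qRe (\<Sum>s<n. \<Sum>t<n. qcnj (X s) * pick_matrix f Z s t * X t)"
proof -
  define T where "T s t k = qcnj (X s) * (Z s ^ k * (1 - f (Z s) * qcnj (f (Z t))) * qcnj (Z t) ^ k) * X t"
    for s t k
  have "T s t sums (qcnj (X s) * pick_matrix f Z s t * X t)" if "s < n" "t < n" for s t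
  proof -
    have "summable (\<lambda>k. Z s ^ k * (1 - f (Z s) * qcnj (f (Z t))) * qcnj (Z t) ^ k)"
      by (rule pick_entry_summable) (use Z that in auto)
    then show ?thesis unfolding T_def pick_matrix_def by (intro sums_mult sums_mult2 summable_sums)
  qed
  then have "(\<lambda>k. \<Sum>s<n. \<Sum>t<n. T s t k) sums (\<Sum>s<n. \<Sum>t<n. qcnj (X s) * pick_matrix f Z s t * X t)"
    by (intro sums_sum) auto
  from bounded_linear.sums[OF bounded_linear_qRe this]
  have S: "(\<lambda>k. qRe (\<Sum>s<n. \<Sum>t<n. T s t k)) sums qRe (\<Sum>s<n. \<Sum>t<n. qcnj (X s) * pick_matrix f Z s t * X t)" .
  have "qRe (\<Sum>s<n. \<Sum>t<n. T s t k)
      = qnormsq (\<Sum>s<n. qcnj (X s) * Z s ^ k) - qnormsq (\<Sum>s<n. qcnj (X s) * Z s ^ k * f (Z s))" for k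
  proof -
    define W where "W = (\<Sum>s<n. qcnj (X s) * Z s ^ k)"
    define V where "V = (\<Sum>s<n. qcnj (X s) * Z s ^ k * f (Z s))"
    have cW: "qcnj W = (\<Sum>t<n. qcnj (Z t) ^ k * X t)"
      by (simp add: W_def qcnj_sum qcnj_mult qcnj_power)
    have cV: "qcnj V = (\<Sum>t<n. qcnj (f (Z t)) * qcnj (Z t) ^ k * X t)"
      by (simp add: V_def qcnj_sum qcnj_mult qcnj_power mult.assoc)
    have "(\<Sum>s<n. \<Sum>t<n. T s t k) = W * qcnj W - V * qcnj V"
      unfolding cW cV unfolding W_def V_def sum_product sum_subtractf[symmetric]
      by (intro sum.cong refl) (simp add: T_def algebra_simps)
    then show ?thesis by (simp del: quat_mult_simps add: W_def V_def qRe_mult_qcnj)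
  qed
  then show ?thesis using S by simp
qed

lemma complex_pick_quadratic_form_sums:
  fixes p x :: "nat \<Rightarrow> complex" and \<phi> :: "complex \<Rightarrow> complex"
  assumes P: "\<forall>s<n. cmod (p s) < 1"
  shows "(\<lambda>k. (cmod (\<Sum>s<n. cnj (x s) * p s ^ k))\<^sup>2 - (cmod (\<Sum>s<n. cnj (x s) * p s ^ k * \<phi> (p s)))\<^sup>2)
     sums Re (\<Sum>s<n. \<Sum>t<n. cnj (x s) * x t * pick_kernel (p s) (p t) (\<phi> (p s)) (\<phi> (p t)))"
proof -
  define T where "T s t k = cnj (x s) * x t * (1 - \<phi> (p s) * cnj (\<phi> (p t))) * (p s * cnj (p t)) ^ k" for s t k
  have "T s t sums (cnj (x s) * x t * pick_kernel (p s) (p t) (\<phi> (p s)) (\<phi> (p t)))" if "s < n" "t < n" for s t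
  proof -
    have "cmod (p s * cnj (p t)) < 1"
      using norm_mult_less_one[of "p s" "cnj (p t)"] P that by (simp add: less_imp_le)
    from sums_mult[OF geometric_sums[OF this], of "cnj (x s) * x t * (1 - \<phi> (p s) * cnj (\<phi> (p t)))"]
    show ?thesis unfolding T_def pick_kernel_def by simp
  qed
  then have "(\<lambda>k. \<Sum>s<n. \<Sum>t<n. T s t k)
      sums (\<Sum>s<n. \<Sum>t<n. cnj (x s) * x t * pick_kernel (p s) (p t) (\<phi> (p s)) (\<phi> (p t)))"
    by (intro sums_sum) auto
  from sums_Re[OF this]
  have S: "(\<lambda>k. Re (\<Sum>s<n. \<Sum>t<n. T s t k))
      sums Re (\<Sum>s<n. \<Sum>t<n. cnj (x s) * x t * pick_kernel (p s) (p t) (\<phi> (p s)) (\<phi> (p t)))" .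
  have "Re (\<Sum>s<n. \<Sum>t<n. T s t k)
      = (cmod (\<Sum>s<n. cnj (x s) * p s ^ k))\<^sup>2 - (cmod (\<Sum>s<n. cnj (x s) * p s ^ k * \<phi> (p s)))\<^sup>2" for k
  proof -
    define W where "W = (\<Sum>s<n. cnj (x s) * p s ^ k)"
    define V where "V = (\<Sum>s<n. cnj (x s) * p s ^ k * \<phi> (p s))"
    have cW: "cnj W = (\<Sum>t<n. x t * cnj (p t) ^ k)" by (simp add: W_def)
    have cV: "cnj V = (\<Sum>t<n. x t * cnj (p t) ^ k * cnj (\<phi> (p t)))" by (simp add: V_def)
    have "(\<Sum>s<n. \<Sum>t<n. T s t k) = W * cnj W - V * cnj V"
      unfolding cW cV unfolding W_def V_def sum_product sum_subtractf[symmetric]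
      by (intro sum.cong refl) (simp add: T_def algebra_simps power_mult_distrib)
    then have "Re (\<Sum>s<n. \<Sum>t<n. T s t k) = Re (W * cnj W - V * cnj V)" by simp
    also have "\<dots> = (cmod W)\<^sup>2 - (cmod V)\<^sup>2" by (simp only: complex_norm_square[symmetric]) simp
    finally show ?thesis unfolding W_def V_def .
  qed
  then show ?thesis using S by simp
qed

section \<open>Quaternionic functions with positive 3 x 3 Pick matrices\<close>

definition pick3_psd :: "(quat \<Rightarrow> quat) \<Rightarrow> bool" where
  "pick3_psd f \<longleftrightarrow> (\<forall>z :: nat \<Rightarrow> quat. (\<forall>i<3. z i \<in> qball) \<longrightarrow> quat_psd 3 (pick_matrix f z))"

lemma pick3_psd_form_nonneg:
  fixes Z X :: "nat \<Rightarrow> quat"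
  assumes "pick3_psd f" "\<forall>s<3. norm (Z s) < 1"
  shows "0 \<le> qRe (\<Sum>s<3. \<Sum>t<3. qcnj (X s) * pick_matrix f Z s t * X t)"
  using assms unfolding pick3_psd_def quat_psd_def quat_nonneg_def qball_def by blast

text \<open>Positivity of the diagonal entry (1 - |f(z)|^2) / (1 - |z|^2) gives |f(z)| <= 1.\<close>
lemma pick3_psd_bound:
  assumes H: "pick3_psd f" and z: "norm z < 1"
  shows "norm (f z) \<le> 1"
proof -
  define Z where "Z = (\<lambda>_::nat. z)"
  define X where "X = (\<lambda>s::nat. if s = 0 then (1::quat) else 0)"
  have Zb: "\<forall>s<3. norm (Z s) < 1" using z by (simp add: Z_def)
  have "qnormsq (\<Sum>s<3. qcnj (X s) * Z s ^ k) - qnormsq (\<Sum>s<3. qcnj (X s) * Z s ^ k * f (Z s))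
      = (1 - (norm (f z))\<^sup>2) * ((norm z)\<^sup>2) ^ k" for k
    by (simp add: sum_lessThan_3 X_def Z_def qnormsq_norm norm_mult norm_power power_mult_distrib
        algebra_simps power_mult[symmetric] mult.commute[of 2])
  moreover have "(\<lambda>k. (1 - (norm (f z))\<^sup>2) * ((norm z)\<^sup>2) ^ k) sums ((1 - (norm (f z))\<^sup>2) * (1 / (1 - (norm z)\<^sup>2)))"
    by (intro sums_mult geometric_sums) (use z in \<open>simp add: abs_square_less_1\<close>)
  ultimately have "qRe (\<Sum>s<3. \<Sum>t<3. qcnj (X s) * pick_matrix f Z s t * X t)
      = (1 - (norm (f z))\<^sup>2) * (1 / (1 - (norm z)\<^sup>2))"
    using pick_quadratic_form_sums[OF Zb, of X f] sums_unique2 by simp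
  moreover have "0 \<le> qRe (\<Sum>s<3. \<Sum>t<3. qcnj (X s) * pick_matrix f Z s t * X t)"
    by (rule pick3_psd_form_nonneg[OF H Zb])
  moreover have "1 - (norm z)\<^sup>2 > 0" using z by (simp add: abs_square_less_1)
  ultimately have "0 \<le> 1 - (norm (f z))\<^sup>2" by (simp add: zero_le_divide_iff)
  then show ?thesis by (simp add: abs_square_le_1)
qed

lemma pick3_psd_relation:
  fixes Z X :: "nat \<Rightarrow> quat"
  assumes H: "pick3_psd f" and Z: "\<forall>s<3. norm (Z s) < 1"
    and rel: "\<And>k. (\<Sum>s<3. qcnj (X s) * Z s ^ k) = 0"
  shows "(\<Sum>s<3. qcnj (X s) * f (Z s)) = 0"
proof -
  define V where "V k = (\<Sum>s<3. qcnj (X s) * Z s ^ k * f (Z s))" for k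
  define F where "F = qRe (\<Sum>s<3. \<Sum>t<3. qcnj (X s) * pick_matrix f Z s t * X t)"
  have "(\<lambda>k. - qnormsq (V k)) sums F"
    using pick_quadratic_form_sums[OF Z, of X f] unfolding rel V_def F_def by (simp add: qnormsq_def)
  then have S: "(\<lambda>k. qnormsq (V k)) sums (- F)"
    using sums_minus by force
  have "sum (\<lambda>k. qnormsq (V k)) {0} \<le> suminf (\<lambda>k. qnormsq (V k))"
    by (rule sum_le_suminf) (use S sums_summable in \<open>auto simp: qnormsq_norm\<close>)
  moreover have "0 \<le> F" unfolding F_def by (rule pick3_psd_form_nonneg[OF H Z])
  ultimately have "qnormsq (V 0) \<le> 0" using sums_unique[OF S] by simp
  then have "V 0 = 0" by (simp add: qnormsq_norm)
  then show ?thesis by (simp add: V_def)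
qed

text \<open>Restricted to the complex slice, any complex-linear contraction P of the values of f (such
  as either of its two complex components) has positive complex 3 x 3 Pick matrices.\<close>
lemma pick3_psd_slice_component:
  assumes H: "pick3_psd f"
    and P_mult: "\<And>c q. P (quat_of_complex c * q) = c * P q"
    and P_sum: "\<And>g (A :: nat set). P (sum g A) = (\<Sum>i\<in>A. P (g i))"
    and P_bound: "\<And>q. (cmod (P q))\<^sup>2 \<le> qnormsq q"
  shows "complex_pick3 (\<lambda>\<zeta>. P (f (quat_of_complex \<zeta>)))"
  unfolding complex_pick3_def
proof (intro allI impI)
  fix p x :: "nat \<Rightarrow> complex"
  assume p: "\<forall>s<(3::nat). cmod (p s) < 1"
  define \<phi> where "\<phi> = (\<lambda>\<zeta>. P (f (quat_of_complex \<zeta>)))"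
  define Z where "Z = (\<lambda>s. quat_of_complex (p s))"
  define X where "X = (\<lambda>s. quat_of_complex (x s))"
  have Z1: "\<forall>s<3. norm (Z s) < 1" using p by (simp add: Z_def)
  have le: "qnormsq (\<Sum>s<3. qcnj (X s) * Z s ^ k) - qnormsq (\<Sum>s<3. qcnj (X s) * Z s ^ k * f (Z s))
      \<le> (cmod (\<Sum>s<3. cnj (x s) * p s ^ k))\<^sup>2 - (cmod (\<Sum>s<3. cnj (x s) * p s ^ k * \<phi> (p s)))\<^sup>2" for k
  proof -
    have W: "(\<Sum>s<3. qcnj (X s) * Z s ^ k) = quat_of_complex (\<Sum>s<3. cnj (x s) * p s ^ k)"
      by (simp add: X_def Z_def quat_of_complex_sum quat_of_complex_mult quat_of_complex_cnj quat_of_complex_power)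
    have V: "(\<Sum>s<3. qcnj (X s) * Z s ^ k * f (Z s)) = (\<Sum>s<3. quat_of_complex (cnj (x s) * p s ^ k) * f (Z s))"
      by (simp add: X_def Z_def quat_of_complex_mult quat_of_complex_cnj quat_of_complex_power)
    have "P (\<Sum>s<3. quat_of_complex (cnj (x s) * p s ^ k) * f (Z s)) = (\<Sum>s<3. cnj (x s) * p s ^ k * \<phi> (p s))"
      unfolding P_sum P_mult \<phi>_def Z_def ..
    with P_bound[of "\<Sum>s<3. quat_of_complex (cnj (x s) * p s ^ k) * f (Z s)"]
    have "(cmod (\<Sum>s<3. cnj (x s) * p s ^ k * \<phi> (p s)))\<^sup>2 \<le> qnormsq (\<Sum>s<3. qcnj (X s) * Z s ^ k * f (Z s))"
      unfolding V by (simp only:)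
    then show ?thesis unfolding W by (simp add: qnormsq_norm)
  qed
  have "qRe (\<Sum>s<3. \<Sum>t<3. qcnj (X s) * pick_matrix f Z s t * X t)
     \<le> Re (\<Sum>s<3. \<Sum>t<3. cnj (x s) * x t * pick_kernel (p s) (p t) (\<phi> (p s)) (\<phi> (p t)))"
    by (rule sums_le[OF le pick_quadratic_form_sums[OF Z1] complex_pick_quadratic_form_sums[OF p]])
  moreover have "0 \<le> qRe (\<Sum>s<3. \<Sum>t<3. qcnj (X s) * pick_matrix f Z s t * X t)"
    by (rule pick3_psd_form_nonneg[OF H Z1])
  ultimately show "0 \<le> Re (\<Sum>s<3. \<Sum>t<3. cnj (x s) * x t *
      pick_kernel (p s) (p t) (P (f (quat_of_complex (p s)))) (P (f (quat_of_complex (p t)))))"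
    by (simp add: \<phi>_def)
qed

text \<open>On the complex slice, f is a power series with right coefficients of norm at most 2,
  obtained by combining the series of its two complex components.\<close>
lemma pick3_psd_slice_series:
  assumes H: "pick3_psd f"
  obtains c where "\<And>k. norm (c k) \<le> 2"
    "\<And>\<zeta>. cmod \<zeta> < 1 \<Longrightarrow> (\<lambda>k. quat_of_complex \<zeta> ^ k * c k) sums f (quat_of_complex \<zeta>)"
proof -
  have "complex_pick3 (\<lambda>\<zeta>. quat_fst (f (quat_of_complex \<zeta>)))"
    by (rule pick3_psd_slice_component[OF H quat_fst_mult quat_fst_sum]) (simp add: qnormsq_fst_snd)
  then obtain c1 where c1: "\<And>k. cmod (c1 k) \<le> 1"
    "\<And>z. cmod z < 1 \<Longrightarrow> (\<lambda>k. c1 k * z ^ k) sums quat_fst (f (quat_of_complex z))"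
    by (rule complex_pick3_power_series) blast
  have "complex_pick3 (\<lambda>\<zeta>. quat_snd (f (quat_of_complex \<zeta>)))"
    by (rule pick3_psd_slice_component[OF H quat_snd_mult quat_snd_sum]) (simp add: qnormsq_fst_snd)
  then obtain c2 where c2: "\<And>k. cmod (c2 k) \<le> 1"
    "\<And>z. cmod z < 1 \<Longrightarrow> (\<lambda>k. c2 k * z ^ k) sums quat_snd (f (quat_of_complex z))"
    by (rule complex_pick3_power_series) blast
  define c where "c k = quat_of_complex (c1 k) + quat_of_complex (c2 k) * quat_j" for k
  show ?thesis
  proof
    show "norm (c k) \<le> 2" for k
    proof -
      have "norm (c k) \<le> norm (quat_of_complex (c1 k)) + norm (quat_of_complex (c2 k) * quat_j)"
        unfolding c_def by (rule norm_triangle_ineq)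
      also have "\<dots> = cmod (c1 k) + cmod (c2 k)" by (simp add: norm_mult)
      also have "\<dots> \<le> 2" using c1(1)[of k] c2(1)[of k] by simp
      finally show ?thesis .
    qed
    show "(\<lambda>k. quat_of_complex \<zeta> ^ k * c k) sums f (quat_of_complex \<zeta>)" if \<zeta>: "cmod \<zeta> < 1" for \<zeta>
    proof -
      have "quat_of_complex \<zeta> ^ k * c k
          = quat_of_complex (c1 k * \<zeta> ^ k) + quat_of_complex (c2 k * \<zeta> ^ k) * quat_j" for k
      proof -
        have "quat_of_complex \<zeta> ^ k * c k = quat_of_complex (\<zeta> ^ k) * quat_of_complex (c1 k)
            + (quat_of_complex (\<zeta> ^ k) * quat_of_complex (c2 k)) * quat_j"
          by (simp add: c_def quat_of_complex_power distrib_left mult.assoc)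
        then show ?thesis by (simp add: quat_of_complex_mult[symmetric] mult.commute)
      qed
      moreover have "(\<lambda>k. quat_of_complex (c1 k * \<zeta> ^ k) + quat_of_complex (c2 k * \<zeta> ^ k) * quat_j)
          sums (quat_of_complex (quat_fst (f (quat_of_complex \<zeta>))) + quat_of_complex (quat_snd (f (quat_of_complex \<zeta>))) * quat_j)"
        by (intro sums_add sums_mult2 bounded_linear.sums[OF bounded_linear_quat_of_complex] c1(2) c2(2) \<zeta>)
      ultimately show ?thesis by (simp add: quat_split[symmetric])
    qed
  qed
qed

section \<open>The representation formula\<close>

lemma slice_power:
  fixes I :: "'a::real_algebra_1"
  assumes I: "I * I = -1"
  shows "(x *\<^sub>R 1 + y *\<^sub>R I) ^ k = Re (Complex x y ^ k) *\<^sub>R 1 + Im (Complex x y ^ k) *\<^sub>R I"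
proof (induction k)
  case 0
  then show ?case by simp
next
  case (Suc k)
  define A where "A = Re (Complex x y ^ k)"
  define B where "B = Im (Complex x y ^ k)"
  have "(x *\<^sub>R 1 + y *\<^sub>R I) ^ Suc k = (x *\<^sub>R 1 + y *\<^sub>R I) * (A *\<^sub>R 1 + B *\<^sub>R I)"
    using Suc by (simp add: A_def B_def)
  also have "\<dots> = (x * A) *\<^sub>R 1 + (x * B) *\<^sub>R I + (y * A) *\<^sub>R I + (y * B) *\<^sub>R (I * I)"
    by (simp add: algebra_simps)
  also have "\<dots> = (x * A - y * B) *\<^sub>R 1 + (x * B + y * A) *\<^sub>R I"
    unfolding I by (simp add: algebra_simps)
  also have "x * A - y * B = Re (Complex x y ^ Suc k)" by (simp add: A_def B_def)
  also have "x * B + y * A = Im (Complex x y ^ Suc k)" by (simp add: A_def B_def)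
  finally show ?case .
qed

lemma quat_slice_decomposition:
  fixes z :: quat
  obtains y I where "z = qRe z *\<^sub>R 1 + y *\<^sub>R I" "I * I = -1" "cmod (Complex (qRe z) y) = norm z"
proof -
  define y where "y = sqrt ((qIm1 z)\<^sup>2 + (qIm2 z)\<^sup>2 + (qIm3 z)\<^sup>2)"
  define I where "I = (if y = 0 then Quat 0 1 0 0 else Quat 0 (qIm1 z / y) (qIm2 z / y) (qIm3 z / y))"
  have y2: "y\<^sup>2 = (qIm1 z)\<^sup>2 + (qIm2 z)\<^sup>2 + (qIm3 z)\<^sup>2" unfolding y_def by (simp add: add_nonneg_nonneg)
  have "z = qRe z *\<^sub>R 1 + y *\<^sub>R I"
  proof (cases "y = 0")
    case True
    then have "(qIm1 z)\<^sup>2 + (qIm2 z)\<^sup>2 + (qIm3 z)\<^sup>2 = 0" using y2 by simp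
    then have "qIm1 z = 0" "qIm2 z = 0" "qIm3 z = 0" by (simp_all add: add_nonneg_eq_0_iff add_nonneg_nonneg)
    then show ?thesis using True by (simp add: quat_eq_iff I_def)
  qed (simp add: quat_eq_iff I_def)
  moreover have "I * I = -1"
  proof (cases "y = 0")
    case False
    have "((qIm1 z)\<^sup>2 + (qIm2 z)\<^sup>2 + (qIm3 z)\<^sup>2) / y\<^sup>2 = 1" unfolding y2[symmetric] using False by simp
    then show ?thesis using False by (simp add: quat_eq_iff I_def power2_eq_square add_divide_distrib algebra_simps)
  qed (simp add: quat_eq_iff I_def)
  moreover have "cmod (Complex (qRe z) y) = norm z"
    by (simp add: cmod_def norm_quat_def qnormsq_def y2 add.assoc)
  ultimately show ?thesis by (rule that)
qed

text \<open>With zeta = x + iy, the powers z^k are the fixed left combination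
  v0 zeta^k + v1 conj(zeta)^k, where v0 = (1 - I i)/2 and v1 = (1 + I i)/2.\<close>
lemma slice_power_combination:
  fixes z :: quat
  obtains \<zeta> v0 v1 where "cmod \<zeta> = norm z"
    "\<And>k. z ^ k = v0 * quat_of_complex \<zeta> ^ k + v1 * quat_of_complex (cnj \<zeta>) ^ k"
proof -
  obtain y I where z: "z = qRe z *\<^sub>R 1 + y *\<^sub>R I" and I: "I * I = -1"
    and norm: "cmod (Complex (qRe z) y) = norm z"
    by (rule quat_slice_decomposition) blast
  define \<zeta> where "\<zeta> = Complex (qRe z) y"
  define i where "i = Quat 0 1 0 0"
  define v0 where "v0 = (1/2) *\<^sub>R (1 - I * i)"
  define v1 where "v1 = (1/2) *\<^sub>R (1 + I * i)"
  have "z ^ k = v0 * quat_of_complex \<zeta> ^ k + v1 * quat_of_complex (cnj \<zeta>) ^ k" for k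
  proof -
    define A where "A = Re (\<zeta> ^ k)"
    define B where "B = Im (\<zeta> ^ k)"
    have "z ^ k = A *\<^sub>R 1 + B *\<^sub>R I"
      using slice_power[OF I, of "qRe z" y k] z by (simp add: A_def B_def \<zeta>_def)
    moreover have "quat_of_complex \<zeta> ^ k = A *\<^sub>R 1 + B *\<^sub>R i"
      unfolding quat_of_complex_power[symmetric] i_def A_def B_def by (simp add: quat_eq_iff)
    moreover have "quat_of_complex (cnj \<zeta>) ^ k = A *\<^sub>R 1 - B *\<^sub>R i"
      unfolding quat_of_complex_power[symmetric] i_def A_def B_def complex_cnj_power[symmetric]
      by (simp add: quat_eq_iff del: complex_cnj_power)
    moreover have "A *\<^sub>R 1 + B *\<^sub>R I = v0 * (A *\<^sub>R 1 + B *\<^sub>R i) + v1 * (A *\<^sub>R 1 - B *\<^sub>R i)"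
      by (simp add: v0_def v1_def i_def quat_eq_iff algebra_simps)
    ultimately show ?thesis by simp
  qed
  then show ?thesis using that[of \<zeta> v0 v1] norm by (simp add: \<zeta>_def)
qed

text \<open>Representation formula: the value of f at z is the same combination of its values at
  zeta and conj(zeta), by the relation property of positive Pick matrices.\<close>
lemma pick3_psd_representation:
  assumes H: "pick3_psd f" and z: "norm z < 1"
  obtains \<zeta> v0 v1 where "cmod \<zeta> = norm z"
    "\<And>k. z ^ k = v0 * quat_of_complex \<zeta> ^ k + v1 * quat_of_complex (cnj \<zeta>) ^ k"
    "f z = v0 * f (quat_of_complex \<zeta>) + v1 * f (quat_of_complex (cnj \<zeta>))"
proof -
  obtain \<zeta> v0 v1 where norm: "cmod \<zeta> = norm z"
    and pow: "\<And>k. z ^ k = v0 * quat_of_complex \<zeta> ^ k + v1 * quat_of_complex (cnj \<zeta>) ^ k"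
    by (rule slice_power_combination[of z]) blast
  define Z where "Z = (\<lambda>s::nat. if s = 0 then quat_of_complex \<zeta> else if s = 1 then quat_of_complex (cnj \<zeta>) else z)"
  define X where "X = (\<lambda>s::nat. if s = 0 then qcnj v0 else if s = 1 then qcnj v1 else -1)"
  have Z: "\<forall>s<3. norm (Z s) < 1" using z norm by (simp add: Z_def)
  have "(\<Sum>s<3. qcnj (X s) * Z s ^ k) = 0" for k
    using pow[of k] by (simp add: sum_lessThan_3 X_def Z_def quat_eq_iff)
  from pick3_psd_relation[OF H Z this]
  have "f z = v0 * f (quat_of_complex \<zeta>) + v1 * f (quat_of_complex (cnj \<zeta>))"
    by (simp add: sum_lessThan_3 X_def Z_def quat_eq_iff)
  then show ?thesis using that norm pow by blast
qed

lemma bounded_coeffs_norm_summable: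
  fixes z :: "'a::real_normed_div_algebra"
  assumes z: "norm z < 1" and c: "\<And>k. norm (c k) \<le> B"
  shows "summable (\<lambda>k. norm (z ^ k * c k))"
proof (rule summable_comparison_test)
  show "summable (\<lambda>k. B * norm z ^ k)" by (intro summable_mult summable_geometric) (use z in simp)
  show "\<exists>N. \<forall>n\<ge>N. norm (norm (z ^ n * c n)) \<le> B * norm z ^ n"
    using c by (intro exI[of _ 0] allI impI) (simp add: norm_mult norm_power mult.commute mult_right_mono)
qed

lemma bounded_coeffs_limsup_root:
  fixes c :: "nat \<Rightarrow> 'a::real_normed_vector"
  assumes c: "\<And>k. norm (c k) \<le> B"
  shows "limsup (\<lambda>k. ereal (root k (norm (c k)))) \<le> 1"
proof -
  define B' where "B' = max B 1"
  have "limsup (\<lambda>k. ereal (root k (norm (c k)))) \<le> limsup (\<lambda>k. ereal (root k B'))"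
  proof (rule Limsup_mono)
    show "\<forall>\<^sub>F k in sequentially. ereal (root k (norm (c k))) \<le> ereal (root k B')"
      using eventually_gt_at_top[of 0]
      by eventually_elim (use c[THEN order_trans, of B'] in \<open>auto simp: B'_def intro: real_root_le_mono\<close>)
  qed
  also have "limsup (\<lambda>k. ereal (root k B')) = 1"
    by (rule lim_imp_Limsup) (auto intro: tendsto_ereal LIMSEQ_root_const simp: one_ereal_def B'_def)
  finally show ?thesis .
qed

lemma pick3_psd_power_series:
  assumes H: "pick3_psd f"
  obtains c where "\<And>k. norm (c k) \<le> 2" "\<And>z. norm z < 1 \<Longrightarrow> (\<lambda>k. z ^ k * c k) sums f z"
proof -
  obtain c where bound: "\<And>k. norm (c k) \<le> 2"
    and slice: "\<And>\<zeta>. cmod \<zeta> < 1 \<Longrightarrow> (\<lambda>k. quat_of_complex \<zeta> ^ k * c k) sums f (quat_of_complex \<zeta>)"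
    by (rule pick3_psd_slice_series[OF H]) blast
  have "(\<lambda>k. z ^ k * c k) sums f z" if z: "norm z < 1" for z
  proof -
    obtain \<zeta> v0 v1 where norm: "cmod \<zeta> = norm z"
      and pow: "\<And>k. z ^ k = v0 * quat_of_complex \<zeta> ^ k + v1 * quat_of_complex (cnj \<zeta>) ^ k"
      and val: "f z = v0 * f (quat_of_complex \<zeta>) + v1 * f (quat_of_complex (cnj \<zeta>))"
      by (rule pick3_psd_representation[OF H z]) blast
    have "(\<lambda>k. v0 * (quat_of_complex \<zeta> ^ k * c k) + v1 * (quat_of_complex (cnj \<zeta>) ^ k * c k))
        sums (v0 * f (quat_of_complex \<zeta>) + v1 * f (quat_of_complex (cnj \<zeta>)))"
      using norm z by (intro sums_add sums_mult slice) auto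
    then show ?thesis unfolding val pow by (simp add: algebra_simps)
  qed
  then show ?thesis using that bound by blast
qed

theorem theorem1p3:
  fixes f :: "quat \<Rightarrow> quat"
  assumes "\<forall>z :: nat \<Rightarrow> quat. (\<forall>i<3. z i \<in> qball) \<longrightarrow> quat_psd 3 (pick_matrix f z)"
  shows "f \<in> left_schur_class"
proof -
  have H: "pick3_psd f" using assms unfolding pick3_psd_def .
  obtain c where bound: "\<And>k. norm (c k) \<le> 2" and sums: "\<And>z. norm z < 1 \<Longrightarrow> (\<lambda>k. z ^ k * c k) sums f z"
    by (rule pick3_psd_power_series[OF H]) blast
  show ?thesis
    unfolding left_schur_class_def qball_def
  proof (intro CollectI exI[of _ c] conjI ballI)
    show "limsup (\<lambda>k. ereal (root k (norm (c k)))) \<le> 1" by (rule bounded_coeffs_limsup_root[OF bound])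
    fix z :: quat assume "z \<in> {a. norm a < 1}"
    then have z: "norm z < 1" by simp
    show "summable (\<lambda>k. norm (z ^ k * c k))" by (rule bounded_coeffs_norm_summable[OF z bound])
    show "f z = (\<Sum>k. z ^ k * c k)" using sums[OF z] by (simp add: sums_iff)
    show "norm (f z) \<le> 1" by (rule pick3_psd_bound[OF H z])
  qed
qed

end
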